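(* Let $n$ be odd and $f:\mathbb{F}_{2^n}\to\mathbb{F}_{2^n}$ be almost bent, and let $k=\max\{\omega(a): a\in\mathbb{F}_{2^n}\}$. Then \[|\mathrm{Im}(f)|\leq 2^n-\frac{k-1}{k}2^{(n+1)/2}.\] In particular, if $f$ is not a permutation, then $|\mathrm{Im}(f)|\leq 2^n-2^{(n-1)/2}$.
   Context: $\mathrm{Tr}$ is the absolute trace, $W_f(b,a)=\sum_{x}(-1)^{\mathrm{Tr}(bf(x)+ax)}$. For $n$ odd, $f$ is almost bent if $W_f(b,a)\in\{0,\pm2^{(n+1)/2}\}$ for all $b\in\mathbb{F}_{2^n}^*$, $a\in\mathbb{F}_{2^n}$. $\omega(a)=|f^{-1}(\{a\})|$. *)

theory Defs
  imports Complex_Main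
begin

text \<open>The finite field F_{2^n} is modelled as an arbitrary finite field type 'a
with CARD('a) = 2^n (unique up to isomorphism).\<close>

definition abs_trace :: "nat \<Rightarrow> 'a::field \<Rightarrow> 'a" where
  "abs_trace n x = (\<Sum>i<n. x ^ (2 ^ i))"

text \<open>(-1)^{Tr(y)}, where Tr(y) is 0 or 1 in F_2.\<close>
definition tr_sign :: "nat \<Rightarrow> 'a::field \<Rightarrow> int" where
  "tr_sign n y = (if abs_trace n y = 0 then 1 else -1)"

definition walsh :: "nat \<Rightarrow> ('a::{field,finite} \<Rightarrow> 'a) \<Rightarrow> 'a \<Rightarrow> 'a \<Rightarrow> int" where
  "walsh n f b a = (\<Sum>x\<in>UNIV. tr_sign n (b * f x + a * x))"

definition almost_bent :: "nat \<Rightarrow> ('a::{field,finite} \<Rightarrow> 'a) \<Rightarrow> bool" where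
  "almost_bent n f \<longleftrightarrow>
     (\<forall>b a. b \<noteq> 0 \<longrightarrow> walsh n f b a \<in> {0, 2 ^ ((n + 1) div 2), - (2 ^ ((n + 1) div 2))})"

definition omega :: "('a \<Rightarrow> 'b) \<Rightarrow> 'b \<Rightarrow> nat" where
  "omega f a = card (f -` {a})"

end

theory Submission
  imports Defs "HOL-Number_Theory.Residues" "HOL-Computational_Algebra.Polynomial"
begin

text \<open>Put \<open>g(c) = \<omega>(c) - 1\<close> and let \<open>G\<close> be its Fourier transform with respect to the
  characters \<open>c \<mapsto> (-1)^Tr(bc)\<close>. As \<open>f\<close> has as many values as arguments, \<open>\<Sum>c g(c) = 0\<close>,
  so \<open>G(0) = 0\<close> and \<open>G(b) = W\<^sub>f(b,0)\<close> for \<open>b \<noteq> 0\<close>; thus \<open>G\<close> only takes the values \<open>0, \<plusminus>M\<close>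
  with \<open>M = 2^((n+1)/2)\<close>. Fourier inversion at a point of maximal fibre gives
  \<open>2^n (k - 1) \<le> \<Sum>b |G(b)|\<close>, and by Parseval \<open>M \<Sum>b |G(b)| = \<Sum>b G(b)\<^sup>2 = 2^n \<Sum>c g(c)\<^sup>2\<close>.
  On the other hand \<open>0 \<le> g \<le> k - 1\<close> on the image of \<open>f\<close> and \<open>g = -1\<close> off it, whence
  \<open>\<Sum>c g(c)\<^sup>2 \<le> k z\<close> for the number \<open>z\<close> of non-values. Hence \<open>M (k - 1) \<le> k z\<close>.\<close>

subsection \<open>Fibres of a map\<close>

lemma sum_comp_eq_sum_omega:
  fixes f :: "'a::finite \<Rightarrow> 'b::finite" and h :: "'b \<Rightarrow> 'c::comm_semiring_1"
  shows "(\<Sum>x\<in>UNIV. h (f x)) = (\<Sum>c\<in>UNIV. of_nat (omega f c) * h c)"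
proof -
  have "(\<Sum>c\<in>UNIV. of_nat (omega f c) * h c) = (\<Sum>c\<in>UNIV. \<Sum>x\<in>{x\<in>UNIV. f x = c}. h (f x))"
    by (intro sum.cong refl) (simp add: omega_def vimage_def)
  also have "\<dots> = (\<Sum>x\<in>UNIV. h (f x))"
    by (rule sum.group) auto
  finally show ?thesis by simp
qed

lemma sum_omega: "(\<Sum>c\<in>UNIV. omega (f :: 'a::finite \<Rightarrow> 'b::finite) c) = card (UNIV :: 'a set)"
  using sum_comp_eq_sum_omega[of "\<lambda>_. 1::nat" f] by simp

lemma omega_pos_iff: "omega f c > 0 \<longleftrightarrow> c \<in> range (f :: 'a::finite \<Rightarrow> 'b)"
  by (auto simp: omega_def card_gt_0_iff)

lemma omega_le_Max: "omega (f :: 'a::finite \<Rightarrow> 'b::finite) c \<le> Max (range (omega f))"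
  by (rule Max_ge) simp_all

lemma Max_omega_pos: "Max (range (omega (f :: 'a::finite \<Rightarrow> 'b::finite))) > 0"
  by (rule less_le_trans[OF _ omega_le_Max[of f "f undefined"]]) (simp add: omega_pos_iff)

lemma Max_omega_ge_2_if_not_bij:
  fixes f :: "'a::finite \<Rightarrow> 'a"
  assumes "\<not> bij f"
  shows "Max (range (omega f)) \<ge> 2"
proof -
  have "\<not> inj f"
    using assms finite_UNIV_inj_surj[of f] by (auto simp: bij_def)
  then obtain x y where "x \<noteq> y" "f x = f y"
    by (auto simp: inj_def)
  then have "card {x, y} \<le> omega f (f x)"
    unfolding omega_def by (intro card_mono) auto
  with \<open>x \<noteq> y\<close> have "2 \<le> omega f (f x)"
    by simp
  then show ?thesis
    using omega_le_Max[of f "f x"] by linarith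
qed

text \<open>Each value contributes \<open>g\<^sup>2 \<le> (k - 1) g\<close> and each non-value \<open>g\<^sup>2 = 1 \<le> (k - 1) g + k\<close>;
  summing, the \<open>g\<close>-terms cancel because \<open>\<Sum>c g c = 0\<close>.\<close>
lemma sum_square_omega_minus_one_le:
  fixes f :: "'a::finite \<Rightarrow> 'b::finite"
  assumes "card (UNIV :: 'a set) = card (UNIV :: 'b set)"
  defines "k \<equiv> int (Max (range (omega f)))"
  shows "(\<Sum>c\<in>UNIV. (int (omega f c) - 1)\<^sup>2) \<le> k * int (card (- range f))"
proof -
  define g where "g c = int (omega f c) - 1" for c
  have sum_g: "(\<Sum>c\<in>UNIV. g c) = 0"
    using arg_cong[OF sum_omega[of f], of int] assms(1) by (simp add: g_def sum_subtractf)
  have "(\<Sum>c\<in>UNIV. (g c)\<^sup>2) \<le> (\<Sum>c\<in>UNIV. (k - 1) * g c + (if c \<in> - range f then k else 0))"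
  proof (rule sum_mono)
    fix c
    show "(g c)\<^sup>2 \<le> (k - 1) * g c + (if c \<in> - range f then k else 0)"
    proof (cases "c \<in> range f")
      case True
      then have "0 \<le> g c" "g c \<le> k - 1"
        using omega_pos_iff[of f c] omega_le_Max[of f c] unfolding g_def k_def by linarith+
      then have "g c * (g c - (k - 1)) \<le> 0"
        by (simp add: mult_nonneg_nonpos)
      with True show ?thesis
        by (simp add: power2_eq_square algebra_simps)
    next
      case False
      with omega_pos_iff[of f c] show ?thesis
        by (simp add: g_def k_def)
    qed
  qed
  also have "\<dots> = (k - 1) * (\<Sum>c\<in>UNIV. g c) + k * int (card (- range f))"
    by (simp add: sum.distrib sum_distrib_left sum.If_cases Int_absorb1 Compl_eq)
  finally have "(\<Sum>c\<in>UNIV. (g c)\<^sup>2) \<le> k * int (card (- range f))"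
    by (simp add: sum_g)
  then show ?thesis
    by (simp add: g_def)
qed

subsection \<open>Finite fields of characteristic 2\<close>

lemma power_card_UNIV_eq: "(x :: 'a::{field,finite}) ^ card (UNIV :: 'a set) = x"
proof (cases "x = 0")
  case False
  have "x * (\<Prod>y\<in>UNIV-{0}. x * y) = x * x ^ (card (UNIV :: 'a set) - 1) * \<Prod>(UNIV-{0})"
    by (simp add: prod.distrib mult_ac)
  also have "x * x ^ (card (UNIV :: 'a set) - 1) = x ^ card (UNIV :: 'a set)"
    using finite_UNIV_card_ge_0[where ?'a = 'a] by (simp flip: power_Suc)
  also have "(\<Prod>y\<in>UNIV-{0}. x * y) = (\<Prod>y\<in>UNIV-{0}. y)"
    by (rule prod.reindex_bij_witness[of _ "\<lambda>y. y / x" "\<lambda>y. x * y"]) (use False in auto)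
  finally show ?thesis
    by simp
qed (use finite_UNIV_card_ge_0[where ?'a = 'a] in auto)

lemma abs_tr_sign [simp]: "\<bar>tr_sign n x\<bar> = 1"
  unfolding tr_sign_def by simp

definition fourier :: "nat \<Rightarrow> ('a::{field,finite} \<Rightarrow> int) \<Rightarrow> 'a \<Rightarrow> int" where
  "fourier n g b = (\<Sum>c\<in>UNIV. g c * tr_sign n (b * c))"

lemma walsh_eq_fourier_omega: "walsh n f b 0 = fourier n (\<lambda>c. int (omega f c)) b"
  unfolding walsh_def fourier_def
  using sum_comp_eq_sum_omega[of "\<lambda>c. tr_sign n (b * c)" f] by (simp add: mult.commute)

context
  fixes n :: nat
  assumes card_UNIV: "card (UNIV :: 'a::{field,finite} set) = 2 ^ n"
begin

lemma CHAR_eq_2: "CHAR('a) = 2"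
proof -
  have "prime CHAR('a)"
    by (rule prime_CHAR_semidom, rule finite_imp_CHAR_pos) simp
  moreover have "CHAR('a) dvd 2 ^ n"
    using CHAR_dvd_CARD[where 'a='a] card_UNIV by simp
  ultimately have "CHAR('a) dvd 2"
    using prime_dvd_power by blast
  then show ?thesis
    using dvd_imp_le[OF \<open>CHAR('a) dvd 2\<close>] prime_gt_1_nat[OF \<open>prime CHAR('a)\<close>] by simp
qed

lemma add_self_eq_0: "x + x = (0 :: 'a)"
proof -
  have "(1 :: 'a) + 1 = of_nat CHAR('a)"
    by (simp add: CHAR_eq_2)
  then have "(1 :: 'a) + 1 = 0"
    by simp
  then show ?thesis
    by (metis distrib_left mult_1_right mult_zero_right)
qed

lemma add_eq_0_iff_eq: "x + y = (0 :: 'a) \<longleftrightarrow> x = y"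
  by (metis add_right_cancel add_self_eq_0)

lemma exponent_pos: "n > 0"
proof (rule ccontr)
  assume "\<not> n > 0"
  then have "card (UNIV :: 'a set) = 1"
    by (simp add: card_UNIV)
  moreover have "card {0, 1 :: 'a} \<le> card (UNIV :: 'a set)"
    by (rule card_mono) simp_all
  ultimately show False
    by simp
qed

lemma power_2_power_add: "(x + y :: 'a) ^ (2 ^ i) = x ^ (2 ^ i) + y ^ (2 ^ i)"
  by (rule freshmans_dream') (simp_all add: CHAR_eq_2)

lemma abs_trace_add: "abs_trace n (x + y :: 'a) = abs_trace n x + abs_trace n y"
  unfolding abs_trace_def by (simp add: power_2_power_add sum.distrib)

text \<open>Squaring shifts the summands \<open>x^(2^i)\<close> cyclically, as \<open>x^(2^n) = x\<close>.\<close>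
lemma abs_trace_power2: "(abs_trace n (x :: 'a))\<^sup>2 = abs_trace n x"
proof -
  have "(abs_trace n x)\<^sup>2 = (\<Sum>i<n. x ^ (2 ^ Suc i))"
    unfolding abs_trace_def
    by (simp add: freshmans_dream_sum CHAR_eq_2 power_mult[symmetric] mult.commute)
  also have "\<dots> = abs_trace n x"
    using sum.lessThan_Suc_shift[of "\<lambda>i. x ^ 2 ^ i" n] power_card_UNIV_eq[of x]
    by (simp add: abs_trace_def card_UNIV)
  finally show ?thesis .
qed

lemma abs_trace_eq_0_or_1: "abs_trace n (x :: 'a) = 0 \<or> abs_trace n x = 1"
proof -
  have "abs_trace n x * (abs_trace n x - 1) = 0"
    using abs_trace_power2[of x] by (simp add: algebra_simps power2_eq_square)
  then show ?thesis
    by simp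
qed

text \<open>The trace is a polynomial of degree \<open>2^(n-1) < |F|\<close>, so it cannot vanish everywhere.\<close>
lemma ex_abs_trace_neq_0: "\<exists>c :: 'a. abs_trace n c \<noteq> 0"
proof (rule ccontr)
  assume trace_0: "\<nexists>c :: 'a. abs_trace n c \<noteq> 0"
  define p :: "'a poly" where "p = (\<Sum>i<n. monom 1 (2 ^ i))"
  have "poly p x = abs_trace n x" for x
    by (simp add: p_def abs_trace_def poly_sum poly_monom)
  with trace_0 have roots: "{x. poly p x = 0} = UNIV"
    by auto
  have "coeff p (2 ^ (n - 1)) = (\<Sum>i<n. if i = n - 1 then 1 else 0)"
    unfolding p_def coeff_sum by (intro sum.cong) auto
  also have "\<dots> = 1"
    using exponent_pos by simp
  finally have "p \<noteq> 0"
    by auto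
  have degree: "degree p \<le> 2 ^ (n - 1)"
    unfolding p_def
  proof (rule degree_sum_le)
    fix i
    assume "i \<in> {..<n}"
    then have "(2::nat) ^ i \<le> 2 ^ (n - 1)"
      by (intro power_increasing) auto
    then show "degree (monom (1::'a) (2 ^ i)) \<le> 2 ^ (n - 1)"
      using degree_monom_le order_trans by blast
  qed simp
  have "(2::nat) ^ n = card {x. poly p x = 0}"
    using roots card_UNIV by simp
  also have "\<dots> \<le> 2 ^ (n - 1)"
    using card_poly_roots_bound[OF \<open>p \<noteq> 0\<close>] degree by linarith
  also have "\<dots> < 2 ^ n"
    using exponent_pos by (intro power_strict_increasing) auto
  finally show False
    by simp
qed

lemma tr_sign_add: "tr_sign n (x + y :: 'a) = tr_sign n x * tr_sign n y"
  using abs_trace_eq_0_or_1[of x] abs_trace_eq_0_or_1[of y] add_self_eq_0[of 1]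
  unfolding tr_sign_def abs_trace_add by auto

lemma sum_tr_sign_mult: "(\<Sum>c\<in>UNIV. tr_sign n (b * c :: 'a)) = (if b = 0 then 2 ^ n else 0)"
proof (cases "b = 0")
  case True
  then show ?thesis
    using exponent_pos card_UNIV by (simp add: tr_sign_def abs_trace_def power_0_left)
next
  case False
  have reindex: "(\<Sum>c\<in>UNIV. tr_sign n (b * c)) = (\<Sum>c\<in>UNIV. tr_sign n (c :: 'a))"
    by (rule sum.reindex_bij_witness[where i="\<lambda>y. y / b" and j="\<lambda>y. b * y"]) (use False in auto)
  obtain c1 :: 'a where "abs_trace n c1 \<noteq> 0"
    using ex_abs_trace_neq_0 by blast
  then have "tr_sign n c1 = -1"
    by (simp add: tr_sign_def)
  have "(\<Sum>c\<in>UNIV. tr_sign n (c :: 'a)) = (\<Sum>c\<in>UNIV. tr_sign n (c + c1))"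
    by (rule sum.reindex_bij_witness[where i="\<lambda>y. y + c1" and j="\<lambda>y. y - c1"]) auto
  also have "\<dots> = - (\<Sum>c\<in>UNIV. tr_sign n (c :: 'a))"
    by (simp add: tr_sign_add \<open>tr_sign n c1 = -1\<close> sum_negf)
  finally show ?thesis
    using reindex False by simp
qed

lemma sum_tr_sign_orthogonal:
  "(\<Sum>b\<in>UNIV. tr_sign n (b * c) * tr_sign n (b * d :: 'a)) = (if c = d then 2 ^ n else 0)"
  using sum_tr_sign_mult[of "c + d"]
  by (simp add: tr_sign_add[symmetric] algebra_simps add_eq_0_iff_eq)

lemma fourier_inversion: "(\<Sum>b\<in>UNIV. fourier n g b * tr_sign n (b * c)) = 2 ^ n * g (c :: 'a)"
proof -
  have "(\<Sum>b\<in>UNIV. fourier n g b * tr_sign n (b * c))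
      = (\<Sum>b\<in>UNIV. \<Sum>d\<in>UNIV. g d * (tr_sign n (b * d) * tr_sign n (b * c)))"
    unfolding fourier_def sum_distrib_right by (simp add: mult.assoc)
  also have "\<dots> = (\<Sum>d\<in>UNIV. g d * (\<Sum>b\<in>UNIV. tr_sign n (b * d) * tr_sign n (b * c)))"
    unfolding sum_distrib_left by (rule sum.swap)
  also have "\<dots> = (\<Sum>d\<in>UNIV. if d = c then 2 ^ n * g c else 0)"
    by (intro sum.cong refl) (simp add: sum_tr_sign_orthogonal)
  finally show ?thesis
    by simp
qed

lemma parseval: "(\<Sum>b\<in>UNIV. (fourier n g b)\<^sup>2) = 2 ^ n * (\<Sum>c\<in>UNIV. (g (c :: 'a))\<^sup>2)"
proof -
  have "(fourier n g b)\<^sup>2 = (\<Sum>c\<in>UNIV. g c * (fourier n g b * tr_sign n (b * c)))" for b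
    unfolding power2_eq_square by (subst (1) fourier_def) (simp add: sum_distrib_left mult_ac)
  then have "(\<Sum>b\<in>UNIV. (fourier n g b)\<^sup>2) = (\<Sum>b\<in>UNIV. \<Sum>c\<in>UNIV. g c * (fourier n g b * tr_sign n (b * c)))"
    by simp
  also have "\<dots> = (\<Sum>c\<in>UNIV. g c * (\<Sum>b\<in>UNIV. fourier n g b * tr_sign n (b * c)))"
    unfolding sum_distrib_left by (rule sum.swap)
  also have "\<dots> = 2 ^ n * (\<Sum>c\<in>UNIV. (g c)\<^sup>2)"
    unfolding fourier_inversion by (simp add: sum_distrib_left power2_eq_square mult_ac)
  finally show ?thesis .
qed

lemma fourier_three_valued_bound:
  assumes three_valued: "\<And>b. fourier n g b \<in> {0, M, -M}" and "M \<ge> 0"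
  shows "M * g (c :: 'a) \<le> (\<Sum>d\<in>UNIV. (g d)\<^sup>2)"
proof -
  have "2 ^ n * (M * g c) = M * (\<Sum>b\<in>UNIV. fourier n g b * tr_sign n (b * c))"
    by (simp add: fourier_inversion)
  also have "\<dots> \<le> M * (\<Sum>b\<in>UNIV. \<bar>fourier n g b\<bar>)"
  proof (intro mult_left_mono sum_mono \<open>M \<ge> 0\<close>)
    fix b
    have "fourier n g b * tr_sign n (b * c) \<le> \<bar>fourier n g b * tr_sign n (b * c)\<bar>"
      by simp
    then show "fourier n g b * tr_sign n (b * c) \<le> \<bar>fourier n g b\<bar>"
      by (simp add: abs_mult)
  qed
  also have "\<dots> = (\<Sum>b\<in>UNIV. (fourier n g b)\<^sup>2)"
    unfolding sum_distrib_left
  proof (rule sum.cong [OF refl])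
    fix b
    show "M * \<bar>fourier n g b\<bar> = (fourier n g b)\<^sup>2"
      using three_valued[of b] \<open>M \<ge> 0\<close> by (auto simp: power2_eq_square)
  qed
  also have "\<dots> = 2 ^ n * (\<Sum>d\<in>UNIV. (g d)\<^sup>2)"
    by (rule parseval)
  finally show ?thesis
    by simp
qed

lemma fourier_omega_minus_one:
  fixes f :: "'a \<Rightarrow> 'a"
  shows "fourier n (\<lambda>c. int (omega f c) - 1) b = (if b = 0 then 0 else walsh n f b 0)"
proof -
  have "fourier n (\<lambda>c. int (omega f c) - 1) b
      = walsh n f b 0 - (\<Sum>c\<in>UNIV. tr_sign n (b * c))"
    by (simp add: walsh_eq_fourier_omega fourier_def left_diff_distrib sum_subtractf)
  moreover have "walsh n f 0 0 = 2 ^ n"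
    using exponent_pos card_UNIV by (simp add: walsh_def tr_sign_def abs_trace_def power_0_left)
  ultimately show ?thesis
    by (simp add: sum_tr_sign_mult)
qed

lemma almost_bent_omega_bound:
  fixes f :: "'a \<Rightarrow> 'a"
  assumes "almost_bent n f"
  shows "2 ^ ((n + 1) div 2) * (int (omega f c) - 1) \<le> (\<Sum>d\<in>UNIV. (int (omega f d) - 1)\<^sup>2)"
  using assms
  by (intro fourier_three_valued_bound) (auto simp: fourier_omega_minus_one almost_bent_def)

lemma almost_bent_card_nonvalues_bound:
  fixes f :: "'a \<Rightarrow> 'a"
  assumes "almost_bent n f"
  defines "k \<equiv> Max (range (omega f))"
  shows "2 ^ ((n + 1) div 2) * (k - 1) \<le> k * card (- range f)"
proof -
  have "k \<ge> 1"
    using Max_omega_pos[of f] by (simp add: k_def)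
  have "k \<in> range (omega f)"
    unfolding k_def by (rule Max_in) simp_all
  then obtain c where "omega f c = k"
    by auto
  then have "2 ^ ((n + 1) div 2) * (int k - 1) \<le> (\<Sum>d\<in>UNIV. (int (omega f d) - 1)\<^sup>2)"
    using almost_bent_omega_bound[OF assms(1)] by metis
  also have "\<dots> \<le> int k * int (card (- range f))"
    using sum_square_omega_minus_one_le[of f] by (simp add: k_def)
  finally have "int (2 ^ ((n + 1) div 2) * (k - 1)) \<le> int (k * card (- range f))"
    using \<open>k \<ge> 1\<close> by (simp add: of_nat_diff)
  then show ?thesis
    by (simp only: of_nat_le_iff)
qed

end

lemma le_if_double_mult_pred_le:
  fixes k p z :: nat
  assumes "2 * p * (k - 1) \<le> k * z" and "k \<ge> 2"
  shows "p \<le> z"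
proof -
  have "k \<le> 2 * (k - 1)"
    using assms(2) by linarith
  then have "k * p \<le> 2 * p * (k - 1)"
    using mult_le_mono1 by (simp add: mult_ac)
  with assms(1) have "k * p \<le> k * z"
    by linarith
  with assms(2) show ?thesis
    by simp
qed

theorem theorem7p2:
  fixes f :: "'a::{field,finite} \<Rightarrow> 'a" and n :: nat
  assumes "card (UNIV :: 'a set) = 2 ^ n"
    and "odd n"
    and "almost_bent n f"
  defines "k \<equiv> Max (range (omega f))"
  shows "real (card (range f)) \<le> 2 ^ n - (real k - 1) / real k * 2 ^ ((n + 1) div 2)
         \<and> (\<not> bij f \<longrightarrow> card (range f) \<le> 2 ^ n - 2 ^ ((n - 1) div 2))"
proof -
  define z where "z = card (- range f)"
  define p :: nat where "p = 2 ^ ((n - 1) div 2)"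
  have half_exponent: "(2::nat) ^ ((n + 1) div 2) = 2 * p"
    using \<open>odd n\<close> by (auto simp: p_def elim!: oddE)
  have key: "2 * p * (k - 1) \<le> k * z"
    using almost_bent_card_nonvalues_bound[OF assms(1,3)] unfolding k_def z_def half_exponent .
  have "k > 0"
    using Max_omega_pos[of f] by (simp add: k_def)
  have card_range: "card (range f) + z = 2 ^ n"
    using card_Un_disjoint[of "range f" "- range f"] assms(1) by (simp add: z_def)
  have "real (2 * p * (k - 1)) \<le> real (k * z)"
    using key by (simp only: of_nat_le_iff)
  with \<open>k > 0\<close> have "real (2 * p) * (real k - 1) \<le> real k * real z"
    by (simp add: of_nat_diff)
  then have "(real k - 1) / real k * 2 ^ ((n + 1) div 2) \<le> real z"
    using \<open>k > 0\<close> unfolding half_exponent[symmetric] by (simp add: field_simps)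
  moreover have "real (card (range f)) + real z = 2 ^ n"
    using arg_cong[OF card_range, of real] by simp
  moreover have "p \<le> z" if "\<not> bij f"
    using le_if_double_mult_pred_le[OF key] Max_omega_ge_2_if_not_bij[OF that] by (simp add: k_def)
  ultimately show ?thesis
    using card_range by (auto simp: p_def)
qed

end
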